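(* There exist constants $m_0\in\mathbb N$ and $C>0$ such that for all $n$, all $m>m_0$ and all $p\in(0,1)$ with $mp^3\le1$, $$\|\bar g_1\ast_1^0\bar g_1\|_2^2\le C\big(mp^5e^{-4mp^2}+(mp^3)^2e^{-4mp^2}\big),$$ $$\|\bar g_2\ast_1^1\bar g_2\|_2^2\le C\big(mp^4e^{-4mp^2}+(mp^3)^2e^{-4mp^2}\big),$$ $$\|\bar g_2\ast_1^1\bar g_1\|_2^2\le C\big(mp^5e^{-4mp^2}+(mp^3)^2e^{-4mp^2}\big).$$
   Context: $\mu_{m,p}$ is the measure on $\{0,1\}^m$ with $\mu_{m,p}(x)=p^{|x|}(1-p)^{m-|x|}$, $|x|=\sum_ix_i$; norms are $L^2$ norms with respect to products of $\mu_{m,p}$. $g:\{0,1\}^m\times\{0,1\}^m\to\{0,1\}$, $g(x,y)=1$ if $x_i=y_i=1$ for some $i$ and $0$ otherwise; $g_1(x)=\int g(x,y)\,d\mu_{m,p}(y)$; $\hat p=1-(1-p^2)^m$; $\bar g_2=g-\hat p$, $\bar g_1=g_1-\hat p$. Contraction: for $f$ on $(\{0,1\}^m)^k$, $h$ on $(\{0,1\}^m)^l$, $0\le a\le b\le k\wedge l$: $f\ast_b^ah(x_1,\ldots,x_{b-a},y_1,\ldots,y_{k-b},z_1,\ldots,z_{l-b})=\int_{(\{0,1\}^m)^a}f(w,x,y)h(w,x,z)\,d\mu_{m,p}^{\otimes a}(w)$. *)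

theory Defs
  imports Complex_Main
begin

text \<open>A point x of {0,1}^m is represented by its support {i. x_i = 1}, a subset of {..<m}.\<close>

definition cube :: "nat \<Rightarrow> nat set set" where
  "cube m = Pow {..<m}"

definition mu :: "nat \<Rightarrow> real \<Rightarrow> nat set \<Rightarrow> real" where
  "mu m p x = p ^ card x * (1 - p) ^ (m - card x)"

definition tuples :: "nat \<Rightarrow> nat \<Rightarrow> nat set list set" where
  "tuples m j = {v. length v = j \<and> set v \<subseteq> cube m}"

definition integ :: "nat \<Rightarrow> real \<Rightarrow> nat \<Rightarrow> (nat set list \<Rightarrow> real) \<Rightarrow> real" where
  "integ m p j F = (\<Sum>v\<in>tuples m j. (\<Prod>i<j. mu m p (v ! i)) * F v)"

definition normsq :: "nat \<Rightarrow> real \<Rightarrow> nat \<Rightarrow> (nat set list \<Rightarrow> real) \<Rightarrow> real" where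
  "normsq m p j F = integ m p j (\<lambda>v. (F v)\<^sup>2)"

text \<open>Contraction f *_b^a h for f on ({0,1}^m)^k, h on ({0,1}^m)^l; the result is a function
  of (x_1..x_{b-a}, y_1..y_{k-b}, z_1..z_{l-b}), given as one list.\<close>
definition contr :: "nat \<Rightarrow> real \<Rightarrow> nat \<Rightarrow> nat \<Rightarrow> nat \<Rightarrow> nat \<Rightarrow>
    (nat set list \<Rightarrow> real) \<Rightarrow> (nat set list \<Rightarrow> real) \<Rightarrow> nat set list \<Rightarrow> real" where
  "contr m p k l a b f h v =
     (let xs = take (b - a) v; ys = take (k - b) (drop (b - a) v); zs = drop (b - a + (k - b)) v
      in integ m p a (\<lambda>w. f (w @ xs @ ys) * h (w @ xs @ zs)))"

definition g :: "nat set \<Rightarrow> nat set \<Rightarrow> real" where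
  "g x y = (if x \<inter> y \<noteq> {} then 1 else 0)"

definition g1 :: "nat \<Rightarrow> real \<Rightarrow> nat set \<Rightarrow> real" where
  "g1 m p x = integ m p 1 (\<lambda>v. g x (v ! 0))"

definition phat :: "nat \<Rightarrow> real \<Rightarrow> real" where
  "phat m p = 1 - (1 - p\<^sup>2) ^ m"

definition gbar2 :: "nat \<Rightarrow> real \<Rightarrow> nat set list \<Rightarrow> real" where
  "gbar2 m p v = g (v ! 0) (v ! 1) - phat m p"

definition gbar1 :: "nat \<Rightarrow> real \<Rightarrow> nat set list \<Rightarrow> real" where
  "gbar1 m p v = g1 m p (v ! 0) - phat m p"

end

theory Submission
  imports Defs
begin

(* Every integrand factorizes over the m coordinates, so every norm is a signed sum of m-th powers
   of explicit polynomials in p. Write q = 1 - p and b = 1 - p^2, so that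
   b^m = 1 - phat is the mean of q^|x| = prod_i q^(x_i).

   The first norm is the fourth central moment of q^|x|, i.e. b^(4m) times the fourth central moment
   of a product of m independent mean-one factors q^(x_i)/b. Their moments t_j exceed 1 by O(p^3),
   and the combinations t3 - 3 t2 + 2 and t4 - 4 t3 + 6 t2 - 3 are O(p^4) and O(p^5); a recursion in
   the number of factors bounds the central moment by O(m p^5 + (m p^3)^2) (1 + O(p^3))^m.

   The other two norms are (up to the square of a variance) second differences
   A1^m - 2 A2^m + A3^m with A1 - A2 = delta = O(p^3) and A2 - A3 = kappa delta, kappa close to 1;
   the mean value theorem bounds them by A1^m (8 m^2 delta^2 + 2 m delta (1 - kappa)).

   Finally all leading powers are at most (1 - 4 p^2 + 4 p^3)^m <= e^4 e^(-4 m p^2) because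
   m p^3 <= 1, and m > 1000 forces p <= 1/10. *)

section \<open>Product measure on the cube\<close>

lemma sum_Pow_prod_mem:
  fixes f :: "'a \<Rightarrow> bool \<Rightarrow> 'b::comm_semiring_1"
  assumes "finite S"
  shows "(\<Sum>X\<in>Pow S. \<Prod>i\<in>S. f i (i \<in> X)) = (\<Prod>i\<in>S. f i True + f i False)"
proof -
  have "(\<Prod>i\<in>S. f i (i \<in> X)) = (\<Prod>i\<in>X. f i True) * (\<Prod>i\<in>S - X. f i False)" if "X \<subseteq> S" for X
    using that assms prod.subset_diff[OF that assms, of "\<lambda>i. f i (i \<in> X)"]
    by (simp add: mult.commute)
  then show ?thesis
    by (simp add: prod_add[OF assms])
qed

lemma prod_if_mem_eq_power:
  assumes "finite S" "X \<subseteq> S"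
  shows "(\<Prod>i\<in>S. if i \<in> X then a else b) = a ^ card X * (b::'a::comm_monoid_mult) ^ (card S - card X)"
  using assms by (simp add: prod.If_cases Int_absorb1 card_Diff_subset finite_subset Diff_eq[symmetric])

lemma sum_cube_prod_mem:
  "(\<Sum>x\<in>cube m. \<Prod>i<m. f i (i \<in> x)) = (\<Prod>i<m. f i True + (f i False :: real))"
  unfolding cube_def by (rule sum_Pow_prod_mem) simp

lemma prod_if_mem_cube_eq_power:
  "x \<in> cube m \<Longrightarrow> (\<Prod>i<m. if i \<in> x then a else b) = a ^ card x * (b::real) ^ (m - card x)"
  unfolding cube_def using prod_if_mem_eq_power[of "{..<m}" x a b] by simp

lemma sum_cube_binomial: "(\<Sum>x\<in>cube m. a ^ card x * b ^ (m - card x)) = (a + b :: real) ^ m"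
proof -
  have "(\<Sum>x\<in>cube m. a ^ card x * b ^ (m - card x)) = (\<Sum>x\<in>cube m. \<Prod>i<m. if i \<in> x then a else b)"
    by (simp add: prod_if_mem_cube_eq_power)
  also have "\<dots> = (a + b) ^ m"
    using sum_cube_prod_mem[where f="\<lambda>i c. if c then a else b"] by simp
  finally show ?thesis .
qed

lemma sum_mu_power_card: "(\<Sum>x\<in>cube m. mu m p x * c ^ card x) = (p * c + (1 - p)) ^ m"
  by (simp add: mu_def power_mult_distrib mult_ac flip: sum_cube_binomial)

lemma sum_mu: "(\<Sum>x\<in>cube m. mu m p x) = 1"
  using sum_mu_power_card[of m p 1] by simp

lemma sum_mu_disjoint_power_card:
  assumes y: "y \<in> cube m"
  shows "(\<Sum>x\<in>cube m. if x \<inter> y = {} then mu m p x * c ^ card x else 0)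
     = (1 - p) ^ card y * (p * c + (1 - p)) ^ (m - card y)"
proof -
  have "(if x \<inter> y = {} then mu m p x * c ^ card x else 0)
      = (\<Prod>i<m. if i \<in> x then (if i \<in> y then 0 else p * c) else 1 - p)" if x: "x \<in> cube m" for x
  proof (cases "x \<inter> y = {}")
    case True
    then have "(\<Prod>i<m. if i \<in> x then (if i \<in> y then 0 else p * c) else 1 - p)
        = (\<Prod>i<m. if i \<in> x then p * c else 1 - p)"
      by (intro prod.cong) auto
    with True x show ?thesis
      by (simp add: prod_if_mem_cube_eq_power mu_def power_mult_distrib)
  next
    case False
    then obtain i where "i \<in> x" "i \<in> y" by auto
    moreover have "i < m" using x \<open>i \<in> x\<close> by (auto simp: cube_def)
    ultimately show ?thesis
      using False by (simp add: prod_zero_iff) blast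
  qed
  then have "(\<Sum>x\<in>cube m. if x \<inter> y = {} then mu m p x * c ^ card x else 0)
      = (\<Prod>i<m. (if i \<in> y then 0 else p * c) + (1 - p))"
    using sum_cube_prod_mem[where f="\<lambda>i b. if b then (if i \<in> y then 0 else p * c) else 1 - p"]
    by simp
  also have "\<dots> = (\<Prod>i<m. if i \<in> y then 1 - p else p * c + (1 - p))"
    by (intro prod.cong) auto
  finally show ?thesis
    using y by (simp add: prod_if_mem_cube_eq_power)
qed

lemma sum_mu_disjoint:
  "y \<in> cube m \<Longrightarrow> (\<Sum>x\<in>cube m. if x \<inter> y = {} then mu m p x else 0) = (1 - p) ^ card y"
  using sum_mu_disjoint_power_card[where c=1] by (simp cong: if_cong)

lemma sum_mu_mu_power_card_union:
  "(\<Sum>y\<in>cube m. \<Sum>z\<in>cube m. mu m p y * mu m p z * (\<alpha> ^ card (y \<union> z) * \<beta> ^ card y * \<gamma> ^ card z))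
   = (p * p * \<alpha> * \<beta> * \<gamma> + p * (1 - p) * \<alpha> * \<beta> + (1 - p) * p * \<alpha> * \<gamma> + (1 - p) * (1 - p)) ^ m"
proof -
  define f where "f a c = (if a then p else 1 - p) * (if c then p else 1 - p) * (if a \<or> c then \<alpha> else 1)
    * (if a then \<beta> else 1) * (if c then \<gamma> else 1)" for a c
  have "mu m p y * mu m p z * (\<alpha> ^ card (y \<union> z) * \<beta> ^ card y * \<gamma> ^ card z) = (\<Prod>i<m. f (i \<in> y) (i \<in> z))"
    if "y \<in> cube m" "z \<in> cube m" for y z
  proof -
    have "y \<union> z \<in> cube m" using that by (auto simp: cube_def)
    have "(\<Prod>i<m. f (i \<in> y) (i \<in> z)) = (\<Prod>i<m. if i \<in> y then p else 1 - p) * (\<Prod>i<m. if i \<in> z then p else 1 - p)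
       * (\<Prod>i<m. if i \<in> y \<union> z then \<alpha> else 1) * (\<Prod>i<m. if i \<in> y then \<beta> else 1) * (\<Prod>i<m. if i \<in> z then \<gamma> else 1)"
      by (simp add: f_def prod.distrib)
    then show ?thesis
      by (simp only: prod_if_mem_cube_eq_power that \<open>y \<union> z \<in> cube m\<close> mu_def) simp
  qed
  then have "(\<Sum>y\<in>cube m. \<Sum>z\<in>cube m. mu m p y * mu m p z * (\<alpha> ^ card (y \<union> z) * \<beta> ^ card y * \<gamma> ^ card z))
      = (\<Sum>y\<in>cube m. \<Sum>z\<in>cube m. \<Prod>i<m. f (i \<in> y) (i \<in> z))"
    by (intro sum.cong refl)
  also have "\<dots> = (\<Sum>y\<in>cube m. \<Prod>i<m. f (i \<in> y) True + f (i \<in> y) False)"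
    by (intro sum.cong refl sum_cube_prod_mem)
  also have "\<dots> = (\<Prod>i<m. f True True + f True False + (f False True + f False False))"
    by (rule sum_cube_prod_mem)
  finally show ?thesis
    by (simp add: f_def algebra_simps)
qed

lemma integ_0: "integ m p 0 F = F []"
proof -
  have "tuples m 0 = {[]}"
    by (auto simp: tuples_def)
  then show ?thesis
    by (simp add: integ_def)
qed

lemma integ_1: "integ m p 1 F = (\<Sum>x\<in>cube m. mu m p x * F [x])"
proof -
  have "tuples m 1 = (\<lambda>x. [x]) ` cube m"
    by (auto simp: tuples_def length_Suc_conv)
  then show ?thesis
    unfolding integ_def by (simp add: sum.reindex inj_on_def)
qed

lemma integ_2: "integ m p 2 F = (\<Sum>x\<in>cube m. \<Sum>y\<in>cube m. mu m p x * mu m p y * F [x, y])"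
proof -
  have tuples_2: "tuples m 2 = (\<lambda>(x, y). [x, y]) ` (cube m \<times> cube m)"
    by (auto simp: tuples_def length_Suc_conv numeral_2_eq_2)
  have "integ m p 2 F = (\<Sum>(x, y)\<in>cube m \<times> cube m. mu m p x * mu m p y * F [x, y])"
    unfolding integ_def tuples_2
    by (subst sum.reindex) (auto simp: inj_on_def numeral_2_eq_2 lessThan_Suc intro!: sum.cong)
  then show ?thesis
    by (simp add: sum.cartesian_product)
qed

section \<open>The three contractions\<close>

lemma power_power_commute: "(a ^ m) ^ n = (a ^ n) ^ m" for a :: "'a::monoid_mult"
  by (simp flip: power_mult add: mult.commute)

lemma one_minus_square_eq: "p * (1 - p) + (1 - p) = 1 - (p::real)\<^sup>2"
  by (simp add: algebra_simps power2_eq_square)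

lemma contr_1_1_0_1: "contr m p 1 1 0 1 f h [x] = f [x] * h [x]"
  by (simp add: contr_def integ_0 Let_def)

lemma contr_2_2_1_1: "contr m p 2 2 1 1 f h [y, z] = (\<Sum>x\<in>cube m. mu m p x * (f [x, y] * h [x, z]))"
  by (simp add: contr_def integ_1[unfolded One_nat_def] Let_def numeral_2_eq_2)

lemma contr_2_1_1_1: "contr m p 2 1 1 1 f h [y] = (\<Sum>x\<in>cube m. mu m p x * (f [x, y] * h [x]))"
  by (simp add: contr_def integ_1[unfolded One_nat_def] Let_def numeral_2_eq_2)

lemma g1_eq:
  assumes "x \<in> cube m"
  shows "g1 m p x = 1 - (1 - p) ^ card x"
proof -
  have "g1 m p x = (\<Sum>y\<in>cube m. mu m p y - (if y \<inter> x = {} then mu m p y else 0))"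
    unfolding g1_def integ_1 by (intro sum.cong) (auto simp: g_def)
  then show ?thesis
    using assms by (simp add: sum_subtractf sum_mu sum_mu_disjoint)
qed

lemma gbar1_eq: "x \<in> cube m \<Longrightarrow> gbar1 m p [x] = (1 - p\<^sup>2) ^ m - (1 - p) ^ card x"
  by (simp add: gbar1_def g1_eq phat_def)

lemma gbar2_eq: "gbar2 m p [x, y] = (1 - p\<^sup>2) ^ m - (if x \<inter> y = {} then 1 else 0)"
  by (simp add: gbar2_def g_def phat_def)

lemma normsq_contr_gbar1_gbar1:
  "normsq m p 1 (contr m p 1 1 0 1 (gbar1 m p) (gbar1 m p))
    = (p * (1 - p) ^ 4 + (1 - p)) ^ m - 4 * (1 - p\<^sup>2) ^ m * (p * (1 - p) ^ 3 + (1 - p)) ^ m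
      + 6 * ((1 - p\<^sup>2) ^ m) ^ 2 * (p * (1 - p) ^ 2 + (1 - p)) ^ m - 3 * ((1 - p\<^sup>2) ^ m) ^ 4"
proof -
  define B where "B = (1 - p\<^sup>2) ^ m"
  define q where "q = 1 - p"
  have "normsq m p 1 (contr m p 1 1 0 1 (gbar1 m p) (gbar1 m p))
      = (\<Sum>x\<in>cube m. B ^ 4 * mu m p x - 4 * B ^ 3 * (mu m p x * q ^ card x)
          + 6 * B ^ 2 * (mu m p x * (q ^ 2) ^ card x) - 4 * B * (mu m p x * (q ^ 3) ^ card x)
          + mu m p x * (q ^ 4) ^ card x)" (is "_ = sum ?term _")
    unfolding normsq_def integ_1 contr_1_1_0_1
  proof (intro sum.cong refl)
    fix x assume "x \<in> cube m"
    have expand: "(B - Y)\<^sup>2 * (B - Y)\<^sup>2 = B ^ 4 - 4 * B ^ 3 * Y + 6 * B ^ 2 * Y ^ 2 - 4 * B * Y ^ 3 + Y ^ 4" for Y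
      by (simp add: algebra_simps power2_eq_square power3_eq_cube power4_eq_xxxx)
    have "(gbar1 m p [x] * gbar1 m p [x])\<^sup>2 = (B - q ^ card x)\<^sup>2 * (B - q ^ card x)\<^sup>2"
      using \<open>x \<in> cube m\<close> by (simp add: gbar1_eq B_def q_def power_mult_distrib)
    also have "\<dots> = B ^ 4 - 4 * B ^ 3 * q ^ card x + 6 * B ^ 2 * (q ^ 2) ^ card x
        - 4 * B * (q ^ 3) ^ card x + (q ^ 4) ^ card x"
      by (simp only: expand power_power_commute[of q "card x"])
    finally have square: "(gbar1 m p [x] * gbar1 m p [x])\<^sup>2 = \<dots>" .
    show "mu m p x * (gbar1 m p [x] * gbar1 m p [x])\<^sup>2 = ?term x"
      unfolding square by (simp add: algebra_simps)
  qed
  also have "\<dots> = B ^ 4 - 4 * B ^ 3 * (p * q + (1 - p)) ^ m + 6 * B ^ 2 * (p * q ^ 2 + (1 - p)) ^ m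
      - 4 * B * (p * q ^ 3 + (1 - p)) ^ m + (p * q ^ 4 + (1 - p)) ^ m"
    by (simp add: sum.distrib sum_subtractf sum_mu_power_card sum_mu flip: sum_distrib_left)
  also have "(p * q + (1 - p)) ^ m = B"
    by (simp add: B_def q_def one_minus_square_eq)
  finally show ?thesis
    by (simp add: B_def q_def mult.assoc flip: power_Suc2)
qed

lemma contr_gbar2_gbar1_eq:
  assumes "y \<in> cube m"
  shows "contr m p 2 1 1 1 (gbar2 m p) (gbar1 m p) [y]
    = (1 - p) ^ card y * ((1 - p\<^sup>2) ^ (m - card y) - (1 - p\<^sup>2) ^ m)"
proof -
  define B where "B = (1 - p\<^sup>2) ^ m"
  define q where "q = 1 - p"
  have "contr m p 2 1 1 1 (gbar2 m p) (gbar1 m p) [y]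
      = (\<Sum>x\<in>cube m. B ^ 2 * mu m p x - B * (mu m p x * q ^ card x)
          - B * (if x \<inter> y = {} then mu m p x else 0)
          + (if x \<inter> y = {} then mu m p x * q ^ card x else 0))"
    unfolding contr_2_1_1_1
    by (intro sum.cong refl) (simp add: gbar2_eq gbar1_eq B_def q_def algebra_simps power2_eq_square)
  also have "\<dots> = B ^ 2 - B * (p * q + (1 - p)) ^ m - B * (1 - p) ^ card y
      + (1 - p) ^ card y * (p * q + (1 - p)) ^ (m - card y)"
    using assms by (simp add: sum.distrib sum_subtractf sum_mu sum_mu_power_card sum_mu_disjoint
        sum_mu_disjoint_power_card flip: sum_distrib_left)
  finally show ?thesis
    by (simp add: B_def q_def one_minus_square_eq algebra_simps power2_eq_square)
qed

lemma normsq_contr_gbar2_gbar1: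
  "normsq m p 1 (contr m p 2 1 1 1 (gbar2 m p) (gbar1 m p))
    = (p * (1 - p) ^ 2 + (1 - p) * (1 - p\<^sup>2) ^ 2) ^ m
      - 2 * ((1 - p\<^sup>2) * (p * (1 - p) ^ 2 + (1 - p) * (1 - p\<^sup>2))) ^ m
      + ((1 - p\<^sup>2) ^ 2 * (p * (1 - p) ^ 2 + (1 - p))) ^ m"
proof -
  define q where "q = 1 - p"
  define b where "b = 1 - p\<^sup>2"
  have "normsq m p 1 (contr m p 2 1 1 1 (gbar2 m p) (gbar1 m p))
     = (\<Sum>y\<in>cube m. (p * q ^ 2) ^ card y * (q * b ^ 2) ^ (m - card y)
        - 2 * b ^ m * ((p * q ^ 2) ^ card y * (q * b) ^ (m - card y))
        + b ^ m * b ^ m * ((p * q ^ 2) ^ card y * q ^ (m - card y)))" (is "_ = sum ?term _")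
    unfolding normsq_def integ_1
  proof (intro sum.cong refl)
    fix y assume y: "y \<in> cube m"
    have "p ^ k * q ^ j * (q ^ k * (b ^ j - B))\<^sup>2
        = (p * q ^ 2) ^ k * (q * b ^ 2) ^ j - 2 * B * ((p * q ^ 2) ^ k * (q * b) ^ j)
          + B * B * ((p * q ^ 2) ^ k * q ^ j)" for k j and B :: real
      by (simp add: power_mult_distrib power2_eq_square algebra_simps)
    then show "mu m p y * (contr m p 2 1 1 1 (gbar2 m p) (gbar1 m p) [y])\<^sup>2 = ?term y"
      unfolding contr_gbar2_gbar1_eq[OF y] mu_def q_def b_def .
  qed
  also have "\<dots> = (p * q ^ 2 + q * b ^ 2) ^ m - 2 * b ^ m * (p * q ^ 2 + q * b) ^ m
      + b ^ m * b ^ m * (p * q ^ 2 + q) ^ m"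
    by (simp add: sum.distrib sum_subtractf sum_cube_binomial flip: sum_distrib_left)
  finally show ?thesis
    by (simp add: q_def b_def power_mult_distrib power_power_commute[of _ 2] power2_eq_square[of "_ ^ m"])
qed

lemma contr_gbar2_gbar2_eq:
  assumes "y \<in> cube m" "z \<in> cube m"
  shows "contr m p 2 2 1 1 (gbar2 m p) (gbar2 m p) [y, z]
    = ((1 - p) ^ card (y \<union> z) - (1 - p) ^ card y * (1 - p) ^ card z)
      + ((1 - p) ^ card y - (1 - p\<^sup>2) ^ m) * ((1 - p) ^ card z - (1 - p\<^sup>2) ^ m)"
proof -
  define B where "B = (1 - p\<^sup>2) ^ m"
  have "y \<union> z \<in> cube m"
    using assms by (auto simp: cube_def)
  have "contr m p 2 2 1 1 (gbar2 m p) (gbar2 m p) [y, z]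
      = (\<Sum>x\<in>cube m. B ^ 2 * mu m p x - B * (if x \<inter> y = {} then mu m p x else 0)
          - B * (if x \<inter> z = {} then mu m p x else 0) + (if x \<inter> (y \<union> z) = {} then mu m p x else 0))"
    unfolding contr_2_2_1_1
    by (intro sum.cong refl) (auto simp: gbar2_eq B_def algebra_simps power2_eq_square)
  also have "\<dots> = B ^ 2 - B * (1 - p) ^ card y - B * (1 - p) ^ card z + (1 - p) ^ card (y \<union> z)"
    using assms \<open>y \<union> z \<in> cube m\<close>
    by (simp add: sum.distrib sum_subtractf sum_mu sum_mu_disjoint flip: sum_distrib_left)
  finally show ?thesis
    by (simp add: B_def algebra_simps power2_eq_square)
qed

lemma sum_mu_mu_union_defect_sq:
  "(\<Sum>y\<in>cube m. \<Sum>z\<in>cube m. mu m p y * mu m p z * ((1 - p) ^ card (y \<union> z) - (1 - p) ^ card y * (1 - p) ^ card z)\<^sup>2)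
    = (p\<^sup>2 * (1 - p) ^ 2 + 2 * p * (1 - p) ^ 3 + (1 - p) ^ 2) ^ m
      - 2 * (p\<^sup>2 * (1 - p) ^ 3 + 2 * p * (1 - p) ^ 3 + (1 - p) ^ 2) ^ m
      + (p\<^sup>2 * (1 - p) ^ 4 + 2 * p * (1 - p) ^ 3 + (1 - p) ^ 2) ^ m"
proof -
  define q where "q = 1 - p"
  have "(\<Sum>y\<in>cube m. \<Sum>z\<in>cube m. mu m p y * mu m p z * (q ^ card (y \<union> z) - q ^ card y * q ^ card z)\<^sup>2)
     = (\<Sum>y\<in>cube m. \<Sum>z\<in>cube m. mu m p y * mu m p z * ((q\<^sup>2) ^ card (y \<union> z) * 1 ^ card y * 1 ^ card z)
        - 2 * (mu m p y * mu m p z * (q ^ card (y \<union> z) * q ^ card y * q ^ card z))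
        + mu m p y * mu m p z * (1 ^ card (y \<union> z) * (q\<^sup>2) ^ card y * (q\<^sup>2) ^ card z))"
    by (intro sum.cong refl) (simp add: power_power_commute[of q] power2_eq_square algebra_simps)
  also have "\<dots> = (p\<^sup>2 * q ^ 2 + 2 * p * q ^ 3 + q ^ 2) ^ m - 2 * (p\<^sup>2 * q ^ 3 + 2 * p * q ^ 3 + q ^ 2) ^ m
      + (p\<^sup>2 * q ^ 4 + 2 * p * q ^ 3 + q ^ 2) ^ m"
    by (simp only: sum.distrib sum_subtractf sum_mu_mu_power_card_union flip: sum_distrib_left)
      (simp add: q_def power2_eq_square power3_eq_cube power4_eq_xxxx algebra_simps)
  finally show ?thesis
    by (simp add: q_def)
qed

lemma sum_mu_centered_sq:
  "(\<Sum>y\<in>cube m. mu m p y * ((1 - p) ^ card y - (1 - p\<^sup>2) ^ m)\<^sup>2)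
    = (p * (1 - p) ^ 2 + (1 - p)) ^ m - ((1 - p\<^sup>2) ^ 2) ^ m"
proof -
  define B where "B = (1 - p\<^sup>2) ^ m"
  define q where "q = 1 - p"
  have "(\<Sum>y\<in>cube m. mu m p y * (q ^ card y - B)\<^sup>2)
      = (\<Sum>y\<in>cube m. mu m p y * (q\<^sup>2) ^ card y - 2 * B * (mu m p y * q ^ card y) + B\<^sup>2 * mu m p y)"
    by (intro sum.cong refl) (simp add: power_power_commute[of q] power2_eq_square algebra_simps)
  also have "\<dots> = (p * q\<^sup>2 + (1 - p)) ^ m - 2 * B * (p * q + (1 - p)) ^ m + B\<^sup>2"
    by (simp add: sum.distrib sum_subtractf sum_mu_power_card sum_mu flip: sum_distrib_left)
  finally show ?thesis
    by (simp add: B_def q_def one_minus_square_eq power_power_commute[of _ 2] power2_eq_square[of "_ ^ m"])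
qed

lemma normsq_contr_gbar2_gbar2_le:
  assumes "0 \<le> p" "p \<le> 1"
  shows "normsq m p 2 (contr m p 2 2 1 1 (gbar2 m p) (gbar2 m p))
    \<le> 2 * ((p\<^sup>2 * (1 - p) ^ 2 + 2 * p * (1 - p) ^ 3 + (1 - p) ^ 2) ^ m
          - 2 * (p\<^sup>2 * (1 - p) ^ 3 + 2 * p * (1 - p) ^ 3 + (1 - p) ^ 2) ^ m
          + (p\<^sup>2 * (1 - p) ^ 4 + 2 * p * (1 - p) ^ 3 + (1 - p) ^ 2) ^ m)
      + 2 * ((p * (1 - p) ^ 2 + (1 - p)) ^ m - ((1 - p\<^sup>2) ^ 2) ^ m)\<^sup>2"
proof -
  define X where "X y z = (1 - p) ^ card (y \<union> z) - (1 - p) ^ card y * (1 - p) ^ card z" for y z :: "nat set"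
  define Y where "Y y = (1 - p) ^ card y - (1 - p\<^sup>2) ^ m" for y :: "nat set"
  have "normsq m p 2 (contr m p 2 2 1 1 (gbar2 m p) (gbar2 m p))
      = (\<Sum>y\<in>cube m. \<Sum>z\<in>cube m. mu m p y * mu m p z * (X y z + Y y * Y z)\<^sup>2)"
    unfolding normsq_def integ_2 by (intro sum.cong refl) (simp only: contr_gbar2_gbar2_eq X_def Y_def)
  also have "\<dots> \<le> (\<Sum>y\<in>cube m. \<Sum>z\<in>cube m. mu m p y * mu m p z * (2 * (X y z)\<^sup>2 + 2 * (Y y * Y z)\<^sup>2))"
  proof (intro sum_mono mult_left_mono)
    show "(u + v)\<^sup>2 \<le> 2 * u\<^sup>2 + 2 * v\<^sup>2" for u v :: real
      using zero_le_power2[of "u - v"] by (simp add: power2_eq_square algebra_simps)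
  qed (use assms in \<open>simp add: mu_def\<close>)
  also have "\<dots> = 2 * (\<Sum>y\<in>cube m. \<Sum>z\<in>cube m. mu m p y * mu m p z * (X y z)\<^sup>2)
      + 2 * (\<Sum>y\<in>cube m. mu m p y * (Y y)\<^sup>2)\<^sup>2"
    by (simp add: sum.distrib sum_distrib_left power2_eq_square sum_product algebra_simps)
  finally show ?thesis
    unfolding X_def Y_def sum_mu_mu_union_defect_sq sum_mu_centered_sq .
qed

section \<open>Central moments of products of independent factors\<close>

lemma abs_le_of_linear_recurrence:
  fixes X :: "nat \<Rightarrow> real" and \<tau> c :: real
  assumes "1 \<le> \<tau>" "0 \<le> c" "X 0 = 0"
    and step: "\<And>k. k < n \<Longrightarrow> \<bar>X (Suc k)\<bar> \<le> \<tau> * \<bar>X k\<bar> + c * \<tau> ^ k"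
  shows "\<bar>X n\<bar> \<le> real n * c * \<tau> ^ n"
  using step
proof (induction n)
  case 0
  then show ?case using assms by simp
next
  case (Suc n)
  have "\<bar>X (Suc n)\<bar> \<le> \<tau> * \<bar>X n\<bar> + c * \<tau> ^ n"
    using Suc.prems by simp
  also have "\<dots> \<le> \<tau> * (real n * c * \<tau> ^ n) + c * \<tau> ^ Suc n"
    using Suc assms by (intro add_mono mult_left_mono power_increasing) auto
  finally show ?case
    by (simp add: algebra_simps)
qed

lemma abs_le_mult_power: "\<bar>x\<bar> \<le> a \<Longrightarrow> 1 \<le> \<tau> \<Longrightarrow> \<bar>x\<bar> \<le> a * \<tau> ^ k" for a x \<tau> :: real
  using mult_left_mono[OF one_le_power[of \<tau> k], of a] abs_ge_zero[of x] by linarith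

lemma abs_sum3_le: "\<bar>a * x + b * y + c\<bar> \<le> \<bar>a\<bar> * \<bar>x\<bar> + \<bar>b\<bar> * \<bar>y\<bar> + \<bar>c\<bar>" for a b c x y :: real
proof -
  have "\<bar>a * x + b * y + c\<bar> \<le> \<bar>a * x\<bar> + \<bar>b * y\<bar> + \<bar>c\<bar>"
    by arith
  then show ?thesis
    by (simp add: abs_mult)
qed

lemma abs_sum4_le:
  "\<bar>a * x + b * y + c * z + d\<bar> \<le> \<bar>a\<bar> * \<bar>x\<bar> + \<bar>b\<bar> * \<bar>y\<bar> + \<bar>c\<bar> * \<bar>z\<bar> + \<bar>d\<bar>" for a b c d x y z :: real
proof -
  have "\<bar>a * x + b * y + c * z + d\<bar> \<le> \<bar>a * x\<bar> + \<bar>b * y\<bar> + \<bar>c * z\<bar> + \<bar>d\<bar>"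
    by arith
  then show ?thesis
    by (simp add: abs_mult)
qed

(* If Y_1, ..., Y_n are independent with E Y_i = 1 and E Y_i^j = t_j, then prod_cmom<k> is
   E (Y_1 ... Y_n - 1)^k. The recursions come from
   Y_1 ... Y_(n+1) - 1 = Y_(n+1) (Y_1 ... Y_n - 1) + (Y_(n+1) - 1). *)
definition prod_cmom2 :: "real \<Rightarrow> nat \<Rightarrow> real" where
  "prod_cmom2 t2 n = t2 ^ n - 1"

definition prod_cmom3 :: "real \<Rightarrow> real \<Rightarrow> nat \<Rightarrow> real" where
  "prod_cmom3 t2 t3 n = t3 ^ n - 3 * t2 ^ n + 2"

definition prod_cmom4 :: "real \<Rightarrow> real \<Rightarrow> real \<Rightarrow> nat \<Rightarrow> real" where
  "prod_cmom4 t2 t3 t4 n = t4 ^ n - 4 * t3 ^ n + 6 * t2 ^ n - 3"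

lemma prod_cmom2_Suc: "prod_cmom2 t2 (Suc n) = t2 * prod_cmom2 t2 n + (t2 - 1)"
  by (simp add: prod_cmom2_def algebra_simps)

lemma prod_cmom3_Suc:
  "prod_cmom3 t2 t3 (Suc n) = t3 * prod_cmom3 t2 t3 n + 3 * (t3 - t2) * prod_cmom2 t2 n + (t3 - 3 * t2 + 2)"
  by (simp add: prod_cmom2_def prod_cmom3_def algebra_simps)

lemma prod_cmom4_Suc:
  "prod_cmom4 t2 t3 t4 (Suc n) = t4 * prod_cmom4 t2 t3 t4 n + 4 * (t4 - t3) * prod_cmom3 t2 t3 n
    + 6 * (t4 - 2 * t3 + t2) * prod_cmom2 t2 n + (t4 - 4 * t3 + 6 * t2 - 3)"
  by (simp add: prod_cmom2_def prod_cmom3_def prod_cmom4_def algebra_simps)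

lemma prod_cmom2_bound:
  assumes "\<bar>t2 - 1\<bar> \<le> \<epsilon>"
  shows "\<bar>prod_cmom2 t2 n\<bar> \<le> real n * \<epsilon> * (1 + \<epsilon>) ^ n"
proof (rule abs_le_of_linear_recurrence)
  fix k
  have "\<bar>prod_cmom2 t2 (Suc k)\<bar> \<le> \<bar>t2\<bar> * \<bar>prod_cmom2 t2 k\<bar> + \<bar>t2 - 1\<bar>"
    unfolding prod_cmom2_Suc by (metis abs_mult abs_triangle_ineq)
  also have "\<dots> \<le> (1 + \<epsilon>) * \<bar>prod_cmom2 t2 k\<bar> + \<epsilon> * (1 + \<epsilon>) ^ k"
    using assms by (intro add_mono mult_right_mono abs_le_mult_power) auto
  finally show "\<bar>prod_cmom2 t2 (Suc k)\<bar> \<le> (1 + \<epsilon>) * \<bar>prod_cmom2 t2 k\<bar> + \<epsilon> * (1 + \<epsilon>) ^ k" .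
qed (use assms in \<open>auto simp: prod_cmom2_def\<close>)

lemma prod_cmom3_bound:
  assumes t: "\<bar>t2 - 1\<bar> \<le> \<epsilon>" "\<bar>t3 - 1\<bar> \<le> \<epsilon>" and d: "\<bar>t3 - 3 * t2 + 2\<bar> \<le> \<delta>" and "n \<le> N"
  shows "\<bar>prod_cmom3 t2 t3 n\<bar> \<le> real n * (6 * real N * \<epsilon>\<^sup>2 + \<delta>) * (1 + \<epsilon>) ^ n"
proof (rule abs_le_of_linear_recurrence)
  fix k assume "k < n"
  have "\<bar>prod_cmom2 t2 k\<bar> \<le> real k * \<epsilon> * (1 + \<epsilon>) ^ k"
    using t(1) by (rule prod_cmom2_bound)
  also have "\<dots> \<le> real N * \<epsilon> * (1 + \<epsilon>) ^ k"
    using t \<open>k < n\<close> \<open>n \<le> N\<close> by (intro mult_right_mono) auto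
  finally have cm2: "\<bar>prod_cmom2 t2 k\<bar> \<le> real N * \<epsilon> * (1 + \<epsilon>) ^ k" .
  have "\<bar>prod_cmom3 t2 t3 (Suc k)\<bar>
      \<le> \<bar>t3\<bar> * \<bar>prod_cmom3 t2 t3 k\<bar> + 3 * \<bar>t3 - t2\<bar> * \<bar>prod_cmom2 t2 k\<bar> + \<bar>t3 - 3 * t2 + 2\<bar>"
    unfolding prod_cmom3_Suc using abs_sum3_le[of t3 _ "3 * (t3 - t2)"] by (simp only: abs_mult abs_numeral)
  also have "\<dots> \<le> (1 + \<epsilon>) * \<bar>prod_cmom3 t2 t3 k\<bar> + 3 * (2 * \<epsilon>) * (real N * \<epsilon> * (1 + \<epsilon>) ^ k) + \<delta> * (1 + \<epsilon>) ^ k"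
    using t d cm2 abs_le_mult_power[OF d, of "1 + \<epsilon>" k] by (intro add_mono mult_mono) auto
  finally show "\<bar>prod_cmom3 t2 t3 (Suc k)\<bar> \<le> (1 + \<epsilon>) * \<bar>prod_cmom3 t2 t3 k\<bar> + (6 * real N * \<epsilon>\<^sup>2 + \<delta>) * (1 + \<epsilon>) ^ k"
    by (simp add: algebra_simps power2_eq_square)
qed (use t d in \<open>auto simp: prod_cmom3_def\<close>)

lemma prod_cmom4_bound:
  assumes t: "\<bar>t2 - 1\<bar> \<le> \<epsilon>" "\<bar>t3 - 1\<bar> \<le> \<epsilon>" "\<bar>t4 - 1\<bar> \<le> \<epsilon>"
    and d: "\<bar>t3 - 3 * t2 + 2\<bar> \<le> \<delta>\<^sub>3" "\<bar>t4 - 4 * t3 + 6 * t2 - 3\<bar> \<le> \<delta>\<^sub>4"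
  shows "\<bar>prod_cmom4 t2 t3 t4 n\<bar>
    \<le> real n * (8 * \<epsilon> * (real n * (6 * real n * \<epsilon>\<^sup>2 + \<delta>\<^sub>3)) + 24 * real n * \<epsilon>\<^sup>2 + \<delta>\<^sub>4) * (1 + \<epsilon>) ^ n"
proof (rule abs_le_of_linear_recurrence)
  fix k assume "k < n"
  have "\<bar>prod_cmom2 t2 k\<bar> \<le> real k * \<epsilon> * (1 + \<epsilon>) ^ k"
    using t(1) by (rule prod_cmom2_bound)
  also have "\<dots> \<le> real n * \<epsilon> * (1 + \<epsilon>) ^ k"
    using t \<open>k < n\<close> by (intro mult_right_mono) auto
  finally have cm2: "\<bar>prod_cmom2 t2 k\<bar> \<le> real n * \<epsilon> * (1 + \<epsilon>) ^ k" .
  have "\<bar>prod_cmom3 t2 t3 k\<bar> \<le> real k * (6 * real n * \<epsilon>\<^sup>2 + \<delta>\<^sub>3) * (1 + \<epsilon>) ^ k"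
    using t d \<open>k < n\<close> by (intro prod_cmom3_bound) auto
  also have "\<dots> \<le> real n * (6 * real n * \<epsilon>\<^sup>2 + \<delta>\<^sub>3) * (1 + \<epsilon>) ^ k"
    using t d \<open>k < n\<close> by (intro mult_right_mono) auto
  finally have cm3: "\<bar>prod_cmom3 t2 t3 k\<bar> \<le> real n * (6 * real n * \<epsilon>\<^sup>2 + \<delta>\<^sub>3) * (1 + \<epsilon>) ^ k" .
  have "\<bar>prod_cmom4 t2 t3 t4 (Suc k)\<bar>
      \<le> \<bar>t4\<bar> * \<bar>prod_cmom4 t2 t3 t4 k\<bar> + 4 * \<bar>t4 - t3\<bar> * \<bar>prod_cmom3 t2 t3 k\<bar>
        + 6 * \<bar>t4 - 2 * t3 + t2\<bar> * \<bar>prod_cmom2 t2 k\<bar> + \<bar>t4 - 4 * t3 + 6 * t2 - 3\<bar>"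
    unfolding prod_cmom4_Suc using abs_sum4_le[of t4 _ "4 * (t4 - t3)" _ "6 * (t4 - 2 * t3 + t2)"]
    by (simp only: abs_mult abs_numeral)
  also have "\<dots> \<le> (1 + \<epsilon>) * \<bar>prod_cmom4 t2 t3 t4 k\<bar> + 4 * (2 * \<epsilon>) * (real n * (6 * real n * \<epsilon>\<^sup>2 + \<delta>\<^sub>3) * (1 + \<epsilon>) ^ k)
      + 6 * (4 * \<epsilon>) * (real n * \<epsilon> * (1 + \<epsilon>) ^ k) + \<delta>\<^sub>4 * (1 + \<epsilon>) ^ k"
    using t d cm2 cm3 abs_le_mult_power[OF d(2), of "1 + \<epsilon>" k] by (intro add_mono mult_mono) auto
  finally show "\<bar>prod_cmom4 t2 t3 t4 (Suc k)\<bar> \<le> (1 + \<epsilon>) * \<bar>prod_cmom4 t2 t3 t4 k\<bar>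
      + (8 * \<epsilon> * (real n * (6 * real n * \<epsilon>\<^sup>2 + \<delta>\<^sub>3)) + 24 * real n * \<epsilon>\<^sup>2 + \<delta>\<^sub>4) * (1 + \<epsilon>) ^ k"
    by (simp add: algebra_simps power2_eq_square)
qed (use t d in \<open>auto simp: prod_cmom4_def\<close>)

lemma prod_cmom4_rescale:
  fixes a2 a3 a4 b :: real
  assumes "b \<noteq> 0"
  shows "a4 ^ m - 4 * b ^ m * a3 ^ m + 6 * (b ^ m) ^ 2 * a2 ^ m - 3 * (b ^ m) ^ 4
    = (b ^ m) ^ 4 * prod_cmom4 (a2 / b ^ 2) (a3 / b ^ 3) (a4 / b ^ 4) m"
  using assms by (simp add: prod_cmom4_def power_divide power_power_commute[of b _ m] field_simps
      eval_nat_numeral)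

section \<open>Differences of powers\<close>

lemma power_diff_le:
  fixes x y :: real
  assumes "0 \<le> y" "y \<le> x"
  shows "x ^ Suc n - y ^ Suc n \<le> real (Suc n) * (x - y) * x ^ n"
proof -
  have "(\<Sum>i<Suc n. x ^ i * y ^ (n - i)) \<le> (\<Sum>i<Suc n. x ^ i * x ^ (n - i))"
    using assms by (intro sum_mono mult_left_mono power_mono) auto
  also have "\<dots> = real (Suc n) * x ^ n"
    by (simp flip: power_add)
  finally have sum_le: "(\<Sum>i<Suc n. x ^ i * y ^ (n - i)) \<le> real (Suc n) * x ^ n" .
  have "x ^ Suc n - y ^ Suc n = (x - y) * (\<Sum>i<Suc n. x ^ i * y ^ (n - i))"
    by (rule diff_power_eq_sum)
  also have "\<dots> \<le> (x - y) * (real (Suc n) * x ^ n)"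
    using sum_le assms by (intro mult_left_mono) auto
  finally show ?thesis
    by (simp only: mult_ac)
qed

lemma power_diff_ge:
  fixes x y :: real
  assumes "0 \<le> y" "y \<le> x"
  shows "real (Suc n) * (x - y) * y ^ n \<le> x ^ Suc n - y ^ Suc n"
proof -
  have "real (Suc n) * y ^ n = (\<Sum>i<Suc n. y ^ i * y ^ (n - i))"
    by (simp flip: power_add)
  also have "\<dots> \<le> (\<Sum>i<Suc n. x ^ i * y ^ (n - i))"
    using assms by (intro sum_mono mult_right_mono power_mono) auto
  finally have sum_ge: "real (Suc n) * y ^ n \<le> (\<Sum>i<Suc n. x ^ i * y ^ (n - i))" .
  have "real (Suc n) * (x - y) * y ^ n = (x - y) * (real (Suc n) * y ^ n)"
    by (simp only: mult_ac)
  also have "\<dots> \<le> (x - y) * (\<Sum>i<Suc n. x ^ i * y ^ (n - i))"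
    using sum_ge assms by (intro mult_left_mono) auto
  also have "\<dots> = x ^ Suc n - y ^ Suc n"
    by (rule diff_power_eq_sum[symmetric])
  finally show ?thesis .
qed

lemma power_diff_le_of_half_le:
  fixes x y :: real
  assumes "0 \<le> y" "y \<le> x" "1/2 \<le> x"
  shows "x ^ m - y ^ m \<le> 2 * real m * (x - y) * x ^ m"
proof (cases m)
  case (Suc n)
  have "x ^ m - y ^ m \<le> real m * (x - y) * x ^ n"
    using power_diff_le[OF assms(1,2)] Suc by simp
  also have "\<dots> \<le> real m * (x - y) * (2 * x ^ m)"
    using assms Suc by (intro mult_left_mono) auto
  finally show ?thesis
    by (simp only: mult_ac)
qed simp

lemma second_difference_powers_le:
  fixes A1 A2 A3 \<delta> \<kappa> :: real
  assumes A3: "1/2 \<le> A3" and A12: "A1 - A2 = \<delta>" and A23: "A2 - A3 = \<kappa> * \<delta>"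
    and \<delta>: "0 \<le> \<delta>" and \<kappa>: "0 \<le> \<kappa>" "\<kappa> \<le> 1" and "2 \<le> m"
  shows "A1 ^ m - 2 * A2 ^ m + A3 ^ m \<le> A1 ^ m * (8 * real m ^ 2 * \<delta> ^ 2 + 2 * real m * \<delta> * (1 - \<kappa>))"
proof -
  obtain n where m: "m = Suc (Suc n)"
    using \<open>2 \<le> m\<close> by (metis add_2_eq_Suc le_Suc_ex)
  have "0 \<le> \<kappa> * \<delta>"
    using \<delta> \<kappa> by simp
  then have ordered: "0 \<le> A3" "A3 \<le> A2" "A2 \<le> A1"
    using A3 A12 A23 \<delta> by auto
  have A1: "1 \<le> 2 * A1"
    using A3 ordered by simp
  have "A1 ^ m - A2 ^ m \<le> real m * \<delta> * A1 ^ Suc n"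
    using power_diff_le[of A2 A1 "Suc n"] ordered A12 m by simp
  moreover have "real m * (\<kappa> * \<delta>) * A3 ^ Suc n \<le> A2 ^ m - A3 ^ m"
    using power_diff_ge[of A3 A2 "Suc n"] ordered A23 m by simp
  ultimately have "A1 ^ m - 2 * A2 ^ m + A3 ^ m
      \<le> real m * \<delta> * ((A1 ^ Suc n - A3 ^ Suc n) + (1 - \<kappa>) * A3 ^ Suc n)"
    by (simp add: algebra_simps)
  also have "\<dots> \<le> real m * \<delta> * (real (Suc n) * ((1 + \<kappa>) * \<delta>) * A1 ^ n + (1 - \<kappa>) * A1 ^ Suc n)"
  proof -
    have "A1 ^ Suc n - A3 ^ Suc n \<le> real (Suc n) * ((1 + \<kappa>) * \<delta>) * A1 ^ n"
      using power_diff_le[of A3 A1 n] ordered A12 A23 by (simp add: algebra_simps)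
    moreover have "A3 ^ Suc n \<le> A1 ^ Suc n"
      using ordered by (intro power_mono) auto
    ultimately show ?thesis
      using \<delta> \<kappa> by (intro mult_left_mono add_mono) auto
  qed
  also have "\<dots> \<le> real m * \<delta> * (real m * (2 * \<delta>) * (4 * A1 ^ m) + (1 - \<kappa>) * (2 * A1 ^ m))"
  proof -
    have "A1 ^ n * 1 \<le> A1 ^ n * (2 * A1) ^ 2" and "A1 ^ Suc n * 1 \<le> A1 ^ Suc n * (2 * A1)"
      using A1 ordered by (intro mult_left_mono one_le_power; simp)+
    then have "A1 ^ n \<le> 4 * A1 ^ m" "A1 ^ Suc n \<le> 2 * A1 ^ m"
      by (simp_all add: m power2_eq_square algebra_simps)
    then show ?thesis
      using \<delta> \<kappa> ordered m by (intro mult_left_mono add_mono mult_mono) auto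
  qed
  also have "\<dots> = A1 ^ m * (8 * real m ^ 2 * \<delta> ^ 2 + 2 * real m * \<delta> * (1 - \<kappa>))"
    by (simp add: algebra_simps power2_eq_square)
  finally show ?thesis .
qed

lemma power_le_exp:
  fixes A s :: real
  assumes "0 \<le> A" "A \<le> 1 + s"
  shows "A ^ m \<le> exp (real m * s)"
proof -
  have "A \<le> exp s"
    using assms(2) exp_ge_add_one_self[of s] by linarith
  then have "A ^ m \<le> exp s ^ m"
    using assms(1) by (rule power_mono)
  then show ?thesis
    by (simp add: exp_of_nat_mult)
qed

lemma power_le_exp_quadratic:
  fixes A c p :: real
  assumes "0 \<le> A" "A \<le> 1 - c * p ^ 2 + c * p ^ 3" "0 \<le> c" "real m * p ^ 3 \<le> 1"
  shows "A ^ m \<le> exp c * exp (- c * real m * p ^ 2)"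
proof -
  have "A ^ m \<le> exp (real m * (- c * p ^ 2 + c * p ^ 3))"
    using assms by (intro power_le_exp) auto
  also have "\<dots> = exp (c * (real m * p ^ 3)) * exp (- c * real m * p ^ 2)"
    by (simp add: algebra_simps flip: exp_add)
  also have "\<dots> \<le> exp c * exp (- c * real m * p ^ 2)"
    using assms by (intro mult_right_mono) (auto simp: mult_left_le)
  finally show ?thesis .
qed

lemma second_difference_powers_estimate:
  fixes A1 A2 A3 \<delta> \<kappa> p r :: real
  assumes "1/2 \<le> A3" "A1 - A2 = \<delta>" "A2 - A3 = \<kappa> * \<delta>" "0 \<le> \<delta>" "\<delta> \<le> p ^ 3"
    and "0 \<le> \<kappa>" "\<kappa> \<le> 1" "\<delta> * (1 - \<kappa>) \<le> r"
    and A1: "A1 \<le> 1 - 4 * p ^ 2 + 4 * p ^ 3" and "2 \<le> m" and mp: "real m * p ^ 3 \<le> 1"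
  shows "A1 ^ m - 2 * A2 ^ m + A3 ^ m \<le> 8 * exp 4 * (real m * r + (real m * p ^ 3)\<^sup>2) * exp (- 4 * real m * p\<^sup>2)"
proof -
  have "0 \<le> \<delta> * (1 - \<kappa>)" "0 \<le> \<kappa> * \<delta>"
    using assms by simp_all
  then have "0 \<le> A1"
    using assms by linarith
  have "A1 ^ m - 2 * A2 ^ m + A3 ^ m \<le> A1 ^ m * (8 * real m ^ 2 * \<delta> ^ 2 + 2 * real m * \<delta> * (1 - \<kappa>))"
    using assms by (intro second_difference_powers_le) auto
  also have "\<dots> \<le> (exp 4 * exp (- 4 * real m * p ^ 2)) * (8 * ((real m * p ^ 3)\<^sup>2 + real m * r))"
  proof (intro mult_mono)
    show "A1 ^ m \<le> exp 4 * exp (- 4 * real m * p ^ 2)"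
      using \<open>0 \<le> A1\<close> A1 mp by (intro power_le_exp_quadratic) auto
    have "\<delta> ^ 2 \<le> (p ^ 3) ^ 2"
      using assms by (intro power_mono) auto
    then have "real m ^ 2 * \<delta> ^ 2 \<le> (real m * p ^ 3)\<^sup>2"
      by (simp add: power_mult_distrib mult_left_mono)
    moreover have "real m * (\<delta> * (1 - \<kappa>)) \<le> real m * r"
      using assms by (intro mult_left_mono) auto
    moreover have "0 \<le> real m * r"
      using assms(8) \<open>0 \<le> \<delta> * (1 - \<kappa>)\<close> by (intro mult_nonneg_nonneg) auto
    ultimately show "8 * real m ^ 2 * \<delta> ^ 2 + 2 * real m * \<delta> * (1 - \<kappa>) \<le> 8 * ((real m * p ^ 3)\<^sup>2 + real m * r)"
      using \<open>0 \<le> \<delta> * (1 - \<kappa>)\<close> by (simp add: algebra_simps)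
  qed (use assms \<open>0 \<le> \<delta> * (1 - \<kappa>)\<close> in auto)
  finally show ?thesis
    by (simp add: algebra_simps)
qed

lemma abs_divide_le_of_half_le:
  fixes x y z :: real
  assumes "1/2 \<le> y" "\<bar>x\<bar> \<le> z"
  shows "\<bar>x / y\<bar> \<le> 2 * z"
proof -
  have "z * 1 \<le> z * (2 * y)"
    using assms by (intro mult_left_mono) auto
  then show ?thesis
    using assms by (simp add: abs_divide pos_divide_le_eq algebra_simps)
qed

section \<open>Estimates for small \<open>p\<close>\<close>

context
  fixes p :: real
  assumes p_pos: "0 < p" and p_small: "p \<le> 1/10"
begin

lemma one_minus_p_bounds: "9/10 \<le> 1 - p" "1 - p \<le> 1"
  using p_pos p_small by auto

lemma one_minus_p_sq_bounds: "99/100 \<le> 1 - p\<^sup>2" "1 - p\<^sup>2 \<le> 1"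
proof -
  have "p\<^sup>2 \<le> (1/10)\<^sup>2"
    using p_pos p_small by (intro power_mono) auto
  then show "99/100 \<le> 1 - p\<^sup>2" "1 - p\<^sup>2 \<le> 1"
    by (simp_all add: power2_eq_square)
qed

lemma moment_ratio_bounds:
  defines "q \<equiv> 1 - p" and "b \<equiv> 1 - p\<^sup>2"
  defines "t2 \<equiv> (p * q ^ 2 + q) / b ^ 2" and "t3 \<equiv> (p * q ^ 3 + q) / b ^ 3" and "t4 \<equiv> (p * q ^ 4 + q) / b ^ 4"
  shows "\<bar>t2 - 1\<bar> \<le> 16 * p ^ 3" "\<bar>t3 - 1\<bar> \<le> 16 * p ^ 3" "\<bar>t4 - 1\<bar> \<le> 16 * p ^ 3"
    and "\<bar>t3 - 3 * t2 + 2\<bar> \<le> 2 * p ^ 4" "\<bar>t4 - 4 * t3 + 6 * t2 - 3\<bar> \<le> 2 * p ^ 5"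
proof -
  have q: "9/10 \<le> q" "q \<le> 1" and b: "99/100 \<le> b" "b \<le> 1"
    unfolding q_def b_def using one_minus_p_bounds one_minus_p_sq_bounds by auto
  have "(99/100) ^ 4 \<le> b ^ 4"
    using b by (intro power_mono) auto
  moreover have "b ^ 4 \<le> b ^ 3" "b ^ 3 \<le> b ^ 2"
    using b by (simp_all add: power_decreasing)
  moreover have "1/2 \<le> (99/100::real) ^ 4"
    by (simp add: power_divide)
  ultimately have b_powers: "1/2 \<le> b ^ 2" "1/2 \<le> b ^ 3" "1/2 \<le> b ^ 4"
    by linarith+
  have "b \<noteq> 0"
    using b by auto
  have n2: "p * q ^ 2 + q - b ^ 2 = p ^ 3 * q"
    and n3: "p * q ^ 3 + q - b ^ 3 = 3 * b * (p ^ 3 * q) - p ^ 4 * q * (q - p)"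
    and n4: "p * q ^ 4 + q - b ^ 4 = 6 * b ^ 2 * (p ^ 3 * q) - 4 * b * (p ^ 4 * q * (q - p)) + p ^ 5 * q * (q ^ 3 + p ^ 3)"
    and n3': "(p * q ^ 3 + q) - 3 * b * (p * q ^ 2 + q) + 2 * b ^ 3 = - (p ^ 4 * q * (q - p))"
    and n4': "(p * q ^ 4 + q) - 4 * b * (p * q ^ 3 + q) + 6 * b ^ 2 * (p * q ^ 2 + q) - 3 * b ^ 4 = p ^ 5 * q * (q ^ 3 + p ^ 3)"
    by (simp_all add: q_def b_def algebra_simps power2_eq_square power3_eq_cube power4_eq_xxxx eval_nat_numeral)
  have "t2 - 1 = (p * q ^ 2 + q - b ^ 2) / b ^ 2"
    and "t3 - 1 = (p * q ^ 3 + q - b ^ 3) / b ^ 3"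
    and "t4 - 1 = (p * q ^ 4 + q - b ^ 4) / b ^ 4"
    and "t3 - 3 * t2 + 2 = ((p * q ^ 3 + q) - 3 * b * (p * q ^ 2 + q) + 2 * b ^ 3) / b ^ 3"
    and "t4 - 4 * t3 + 6 * t2 - 3
      = ((p * q ^ 4 + q) - 4 * b * (p * q ^ 3 + q) + 6 * b ^ 2 * (p * q ^ 2 + q) - 3 * b ^ 4) / b ^ 4"
    unfolding t2_def t3_def t4_def using \<open>b \<noteq> 0\<close> by (simp_all add: field_simps eval_nat_numeral)
  note t = this[unfolded n2 n3 n4 n3' n4']
  have "p * p \<le> p * 1"
    using p_pos p_small by (intro mult_left_mono) auto
  then have "q ^ 3 + p ^ 3 \<le> 1"
    by (simp add: q_def power3_eq_cube algebra_simps)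
  moreover have "0 \<le> q - p" "q - p \<le> 1" "0 \<le> q ^ 3 + p ^ 3"
    using q p_pos p_small by (simp_all add: q_def)
  ultimately have "q * (q - p) \<le> 1" "q * (q ^ 3 + p ^ 3) \<le> 1"
    using q by (simp_all add: mult_le_one)
  then have X: "0 \<le> p ^ 3 * q" "p ^ 3 * q \<le> p ^ 3"
    and Y: "0 \<le> p ^ 4 * q * (q - p)" "p ^ 4 * q * (q - p) \<le> p ^ 4"
    and Z: "0 \<le> p ^ 5 * q * (q ^ 3 + p ^ 3)" "p ^ 5 * q * (q ^ 3 + p ^ 3) \<le> p ^ 5"
    using p_pos q \<open>0 \<le> q - p\<close> \<open>0 \<le> q ^ 3 + p ^ 3\<close> by (simp_all add: mult_left_le mult.assoc)
  have b2: "0 \<le> b ^ 2" "b ^ 2 \<le> 1"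
    using b by (simp_all add: power_le_one)
  have bX: "0 \<le> b * (p ^ 3 * q)" "b * (p ^ 3 * q) \<le> p ^ 3" "0 \<le> b ^ 2 * (p ^ 3 * q)" "b ^ 2 * (p ^ 3 * q) \<le> p ^ 3"
    and bY: "0 \<le> b * (p ^ 4 * q * (q - p))" "b * (p ^ 4 * q * (q - p)) \<le> p ^ 4"
    using X Y b b2 by (auto intro: order_trans[OF mult_left_le_one_le])
  have "p ^ 3 * p \<le> p ^ 3 * (1/10)" "p ^ 3 * (p * p) \<le> p ^ 3 * ((1/10) * (1/10))"
    using p_pos p_small by (intro mult_left_mono mult_mono; simp)+
  then have powers: "p ^ 4 \<le> p ^ 3 / 10" "p ^ 5 \<le> p ^ 3 / 100" "0 \<le> p ^ 4"
    using p_pos by (simp_all add: eval_nat_numeral)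
  have "\<bar>p ^ 3 * q\<bar> \<le> p ^ 3"
    using X by simp
  from abs_divide_le_of_half_le[OF b_powers(1) this] show "\<bar>t2 - 1\<bar> \<le> 16 * p ^ 3"
    unfolding t(1) using X by linarith
  have "\<bar>3 * b * (p ^ 3 * q) - p ^ 4 * q * (q - p)\<bar> \<le> 8 * p ^ 3"
    using bX Y powers unfolding abs_le_iff by linarith
  from abs_divide_le_of_half_le[OF b_powers(2) this] show "\<bar>t3 - 1\<bar> \<le> 16 * p ^ 3"
    unfolding t(2) by simp
  have "\<bar>6 * b ^ 2 * (p ^ 3 * q) - 4 * b * (p ^ 4 * q * (q - p)) + p ^ 5 * q * (q ^ 3 + p ^ 3)\<bar> \<le> 8 * p ^ 3"
    using bX bY Z powers unfolding abs_le_iff by linarith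
  from abs_divide_le_of_half_le[OF b_powers(3) this] show "\<bar>t4 - 1\<bar> \<le> 16 * p ^ 3"
    unfolding t(3) by simp
  have "\<bar>- (p ^ 4 * q * (q - p))\<bar> \<le> p ^ 4"
    using Y by simp
  from abs_divide_le_of_half_le[OF b_powers(2) this] show "\<bar>t3 - 3 * t2 + 2\<bar> \<le> 2 * p ^ 4"
    unfolding t(4) .
  have "\<bar>p ^ 5 * q * (q ^ 3 + p ^ 3)\<bar> \<le> p ^ 5"
    using Z by simp
  from abs_divide_le_of_half_le[OF b_powers(3) this] show "\<bar>t4 - 4 * t3 + 6 * t2 - 3\<bar> \<le> 2 * p ^ 5"
    unfolding t(5) .
qed

lemma normsq_contr_gbar1_gbar1_estimate:
  assumes mp: "real m * p ^ 3 \<le> 1"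
  shows "normsq m p 1 (contr m p 1 1 0 1 (gbar1 m p) (gbar1 m p))
    \<le> 2 ^ 18 * exp 16 * (real m * p ^ 5 + (real m * p ^ 3)\<^sup>2) * exp (- 4 * real m * p\<^sup>2)"
proof -
  define q where "q = 1 - p"
  define b where "b = 1 - p\<^sup>2"
  define t2 where "t2 = (p * q ^ 2 + q) / b ^ 2"
  define t3 where "t3 = (p * q ^ 3 + q) / b ^ 3"
  define t4 where "t4 = (p * q ^ 4 + q) / b ^ 4"
  define W where "W = real m * p ^ 3"
  define \<epsilon> where "\<epsilon> = 16 * p ^ 3"
  have b: "99/100 \<le> b" "b \<le> 1"
    unfolding b_def using one_minus_p_sq_bounds by auto
  have W: "0 \<le> W" "W \<le> 1"
    using p_pos mp by (simp_all add: W_def)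
  have "normsq m p 1 (contr m p 1 1 0 1 (gbar1 m p) (gbar1 m p)) = (b ^ m) ^ 4 * prod_cmom4 t2 t3 t4 m"
    unfolding normsq_contr_gbar1_gbar1 t2_def t3_def t4_def q_def b_def
    using one_minus_p_sq_bounds by (intro prod_cmom4_rescale) auto
  also have "\<dots> \<le> (b ^ m) ^ 4 * \<bar>prod_cmom4 t2 t3 t4 m\<bar>"
    using b by (intro mult_left_mono) auto
  also have "\<dots> \<le> exp (- 4 * real m * p\<^sup>2) * (2 ^ 18 * (real m * p ^ 5 + W\<^sup>2) * exp 16)"
  proof (rule mult_mono)
    have "b ^ m \<le> exp (real m * - p\<^sup>2)"
      using b by (intro power_le_exp) (auto simp: b_def)
    then have "(b ^ m) ^ 4 \<le> exp (real m * - p\<^sup>2) ^ 4"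
      using b by (intro power_mono) auto
    then show "(b ^ m) ^ 4 \<le> exp (- 4 * real m * p\<^sup>2)"
      by (simp flip: exp_of_nat_mult add: algebra_simps)
    have "\<bar>prod_cmom4 t2 t3 t4 m\<bar>
        \<le> real m * (8 * \<epsilon> * (real m * (6 * real m * \<epsilon>\<^sup>2 + 2 * p ^ 4)) + 24 * real m * \<epsilon>\<^sup>2 + 2 * p ^ 5)
          * (1 + \<epsilon>) ^ m"
      unfolding \<epsilon>_def t2_def t3_def t4_def q_def b_def by (intro prod_cmom4_bound moment_ratio_bounds)
    also have "\<dots> \<le> (2 ^ 18 * (real m * p ^ 5 + W\<^sup>2)) * exp 16"
    proof (rule mult_mono)
      have "real m * (8 * \<epsilon> * (real m * (6 * real m * \<epsilon>\<^sup>2 + 2 * p ^ 4)) + 24 * real m * \<epsilon>\<^sup>2 + 2 * p ^ 5)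
          = 196608 * W ^ 3 + 256 * (W\<^sup>2 * p) + 6144 * W\<^sup>2 + 2 * (real m * p ^ 5)"
        by (simp add: W_def \<epsilon>_def algebra_simps power2_eq_square power3_eq_cube eval_nat_numeral)
      moreover have "W ^ 3 \<le> W\<^sup>2" "W\<^sup>2 * p \<le> W\<^sup>2" "0 \<le> W\<^sup>2" "0 \<le> real m * p ^ 5"
        using W p_pos p_small by (simp_all add: power_decreasing mult_left_le)
      moreover have "2 ^ 18 * (real m * p ^ 5 + W\<^sup>2) = 262144 * (real m * p ^ 5) + 262144 * W\<^sup>2"
        by (simp add: algebra_simps)
      ultimately show "real m * (8 * \<epsilon> * (real m * (6 * real m * \<epsilon>\<^sup>2 + 2 * p ^ 4)) + 24 * real m * \<epsilon>\<^sup>2 + 2 * p ^ 5)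
          \<le> 2 ^ 18 * (real m * p ^ 5 + W\<^sup>2)"
        by linarith
      have "(1 + \<epsilon>) ^ m \<le> exp (real m * \<epsilon>)"
        using p_pos by (intro power_le_exp) (auto simp: \<epsilon>_def)
      also have "\<dots> \<le> exp 16"
        using mp by (simp add: \<epsilon>_def)
      finally show "(1 + \<epsilon>) ^ m \<le> exp 16" .
    qed (use p_pos in \<open>auto simp: \<epsilon>_def\<close>)
    finally show "\<bar>prod_cmom4 t2 t3 t4 m\<bar> \<le> 2 ^ 18 * (real m * p ^ 5 + W\<^sup>2) * exp 16" .
  qed (use b in auto)
  finally show ?thesis
    by (simp add: W_def algebra_simps)
qed

lemma centered_moment_square_estimate:
  assumes "real m * p ^ 3 \<le> 1"
  shows "((p * (1 - p) ^ 2 + (1 - p)) ^ m - ((1 - p\<^sup>2) ^ 2) ^ m)\<^sup>2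
    \<le> 4 * exp 4 * (real m * p ^ 3)\<^sup>2 * exp (- 4 * real m * p\<^sup>2)"
proof -
  define q where "q = 1 - p"
  define a where "a = p * q\<^sup>2 + q"
  define E where "E = exp 2 * exp (- 2 * real m * p\<^sup>2)"
  have q: "9/10 \<le> q" "q \<le> 1"
    unfolding q_def using one_minus_p_bounds by auto
  have a_diff: "a - (1 - p\<^sup>2) ^ 2 = p ^ 3 * q"
    by (simp add: a_def q_def algebra_simps power2_eq_square power3_eq_cube)
  have "0 \<le> p ^ 3 * q" "0 \<le> p * q\<^sup>2"
    using p_pos q by simp_all
  then have ordered: "0 \<le> (1 - p\<^sup>2) ^ 2" "(1 - p\<^sup>2) ^ 2 \<le> a" "1/2 \<le> a"
    using a_diff q unfolding a_def by simp_all
  then have lower: "0 \<le> a ^ m - ((1 - p\<^sup>2) ^ 2) ^ m"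
    by (simp add: power_mono)
  have upper: "a ^ m - ((1 - p\<^sup>2) ^ 2) ^ m \<le> 2 * (real m * p ^ 3) * E"
  proof -
    have "a ^ m - ((1 - p\<^sup>2) ^ 2) ^ m \<le> 2 * real m * (p ^ 3 * q) * a ^ m"
      using power_diff_le_of_half_le[OF ordered] a_diff by simp
    also have "\<dots> \<le> 2 * real m * p ^ 3 * E"
    proof (intro mult_mono)
      have "a = 1 - 2 * p ^ 2 + p ^ 3"
        by (simp add: a_def q_def algebra_simps power2_eq_square power3_eq_cube)
      then have "a \<le> 1 - 2 * p ^ 2 + 2 * p ^ 3"
        using zero_less_power[OF p_pos, of 3] by linarith
      then show "a ^ m \<le> E"
        unfolding E_def using ordered assms by (intro power_le_exp_quadratic) auto
    qed (use p_pos q ordered in \<open>auto simp: mult_left_le\<close>)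
    finally show ?thesis
      by (simp add: mult_ac)
  qed
  have "(a ^ m - ((1 - p\<^sup>2) ^ 2) ^ m)\<^sup>2 \<le> (2 * (real m * p ^ 3) * E)\<^sup>2"
    using upper lower by (rule power_mono)
  also have "\<dots> = 4 * exp 4 * (real m * p ^ 3)\<^sup>2 * exp (- 4 * real m * p\<^sup>2)"
    by (simp add: E_def power_mult_distrib algebra_simps flip: exp_add exp_of_nat_mult)
  finally show ?thesis
    by (simp add: a_def q_def)
qed

lemma normsq_contr_gbar2_gbar2_estimate:
  assumes "2 \<le> m" "real m * p ^ 3 \<le> 1"
  shows "normsq m p 2 (contr m p 2 2 1 1 (gbar2 m p) (gbar2 m p))
    \<le> 24 * exp 4 * (real m * p ^ 4 + (real m * p ^ 3)\<^sup>2) * exp (- 4 * real m * p\<^sup>2)"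
proof -
  define q where "q = 1 - p"
  have q: "9/10 \<le> q" "q \<le> 1"
    unfolding q_def using one_minus_p_bounds by auto
  have "1/2 \<le> q * q"
    using mult_mono[OF q(1) q(1)] q by simp
  also have "\<dots> \<le> p\<^sup>2 * q ^ 4 + 2 * p * q ^ 3 + q ^ 2"
    using p_pos q by (simp add: power2_eq_square)
  finally have B3: "1/2 \<le> p\<^sup>2 * q ^ 4 + 2 * p * q ^ 3 + q ^ 2" .
  have B12: "(p\<^sup>2 * q ^ 2 + 2 * p * q ^ 3 + q ^ 2) - (p\<^sup>2 * q ^ 3 + 2 * p * q ^ 3 + q ^ 2) = p ^ 3 * q\<^sup>2"
    and B23: "(p\<^sup>2 * q ^ 3 + 2 * p * q ^ 3 + q ^ 2) - (p\<^sup>2 * q ^ 4 + 2 * p * q ^ 3 + q ^ 2) = q * (p ^ 3 * q\<^sup>2)"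
    by (simp_all add: q_def algebra_simps power2_eq_square power3_eq_cube power4_eq_xxxx)
  have "q\<^sup>2 \<le> 1"
    using q by (simp add: power_le_one)
  then have \<delta>: "0 \<le> p ^ 3 * q\<^sup>2" "p ^ 3 * q\<^sup>2 \<le> p ^ 3" and r: "p ^ 3 * q\<^sup>2 * (1 - q) \<le> p ^ 4"
    using p_pos by (simp_all add: q_def mult_left_le eval_nat_numeral)
  have "p\<^sup>2 * q ^ 2 + 2 * p * q ^ 3 + q ^ 2 = 1 - 4 * p\<^sup>2 + 4 * p ^ 3 - p ^ 4"
    by (simp add: q_def algebra_simps power2_eq_square power3_eq_cube power4_eq_xxxx)
  then have B1: "p\<^sup>2 * q ^ 2 + 2 * p * q ^ 3 + q ^ 2 \<le> 1 - 4 * p\<^sup>2 + 4 * p ^ 3"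
    using zero_less_power[OF p_pos, of 4] by linarith
  have "(p\<^sup>2 * q ^ 2 + 2 * p * q ^ 3 + q ^ 2) ^ m - 2 * (p\<^sup>2 * q ^ 3 + 2 * p * q ^ 3 + q ^ 2) ^ m
      + (p\<^sup>2 * q ^ 4 + 2 * p * q ^ 3 + q ^ 2) ^ m
      \<le> 8 * exp 4 * (real m * p ^ 4 + (real m * p ^ 3)\<^sup>2) * exp (- 4 * real m * p\<^sup>2)"
    using q by (intro second_difference_powers_estimate[OF B3 B12 B23 \<delta> _ _ r B1 assms]) auto
  note second_difference = this[unfolded q_def]
  have "normsq m p 2 (contr m p 2 2 1 1 (gbar2 m p) (gbar2 m p))
      \<le> 2 * ((p\<^sup>2 * (1 - p) ^ 2 + 2 * p * (1 - p) ^ 3 + (1 - p) ^ 2) ^ m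
          - 2 * (p\<^sup>2 * (1 - p) ^ 3 + 2 * p * (1 - p) ^ 3 + (1 - p) ^ 2) ^ m
          + (p\<^sup>2 * (1 - p) ^ 4 + 2 * p * (1 - p) ^ 3 + (1 - p) ^ 2) ^ m)
      + 2 * ((p * (1 - p) ^ 2 + (1 - p)) ^ m - ((1 - p\<^sup>2) ^ 2) ^ m)\<^sup>2"
    using p_pos p_small by (intro normsq_contr_gbar2_gbar2_le) auto
  also have "\<dots> \<le> 2 * (8 * exp 4 * (real m * p ^ 4 + (real m * p ^ 3)\<^sup>2) * exp (- 4 * real m * p\<^sup>2))
        + 2 * (4 * exp 4 * (real m * p ^ 3)\<^sup>2 * exp (- 4 * real m * p\<^sup>2))"
    using second_difference centered_moment_square_estimate[OF assms(2)] by (intro add_mono mult_left_mono) simp_all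
  also have "\<dots> \<le> 24 * exp 4 * (real m * p ^ 4 + (real m * p ^ 3)\<^sup>2) * exp (- 4 * real m * p\<^sup>2)"
  proof -
    have "2 * (8 * c * (a + w) * E) + 2 * (4 * c * w * E) \<le> 24 * c * (a + w) * E"
      if "0 \<le> c * E" "0 \<le> a" for a w c E :: real
    proof -
      have "c * E * (16 * a + 24 * w) \<le> c * E * (24 * a + 24 * w)"
        using that by (intro mult_left_mono) auto
      then show ?thesis
        by (simp add: algebra_simps)
    qed
    then show ?thesis
      using p_pos by simp
  qed
  finally show ?thesis .
qed

lemma normsq_contr_gbar2_gbar1_estimate:
  assumes "2 \<le> m" "real m * p ^ 3 \<le> 1"
  shows "normsq m p 1 (contr m p 2 1 1 1 (gbar2 m p) (gbar1 m p))
    \<le> 8 * exp 4 * (real m * p ^ 5 + (real m * p ^ 3)\<^sup>2) * exp (- 4 * real m * p\<^sup>2)"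
proof -
  define q where "q = 1 - p"
  define b where "b = 1 - p\<^sup>2"
  have q: "9/10 \<le> q" "q \<le> 1" and b: "99/100 \<le> b" "b \<le> 1"
    unfolding q_def b_def using one_minus_p_bounds one_minus_p_sq_bounds by auto
  have "1/2 \<le> b * b * q"
    using mult_mono[OF mult_mono[OF b(1) b(1)] q(1)] b q by simp
  also have "\<dots> \<le> b\<^sup>2 * (p * q\<^sup>2 + q)"
    using p_pos b q by (simp add: power2_eq_square)
  finally have A3: "1/2 \<le> b\<^sup>2 * (p * q\<^sup>2 + q)" .
  have A12: "(p * q\<^sup>2 + q * b\<^sup>2) - b * (p * q\<^sup>2 + q * b) = p ^ 3 * q\<^sup>2"
    and A23: "b * (p * q\<^sup>2 + q * b) - b\<^sup>2 * (p * q\<^sup>2 + q) = b * (p ^ 3 * q\<^sup>2)"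
    by (simp_all add: b_def algebra_simps power2_eq_square power3_eq_cube)
  have "q\<^sup>2 \<le> 1"
    using q by (simp add: power_le_one)
  then have \<delta>: "0 \<le> p ^ 3 * q\<^sup>2" "p ^ 3 * q\<^sup>2 \<le> p ^ 3" and r: "p ^ 3 * q\<^sup>2 * (1 - b) \<le> p ^ 5"
    using p_pos by (simp_all add: b_def mult_left_le eval_nat_numeral)
  have "p * q\<^sup>2 + q * b\<^sup>2 = 1 - 4 * p\<^sup>2 + 3 * p ^ 3 + p ^ 4 - p ^ 5"
    by (simp add: q_def b_def algebra_simps power2_eq_square power3_eq_cube power4_eq_xxxx eval_nat_numeral)
  moreover have "p ^ 4 \<le> p ^ 3"
    using p_pos p_small by (simp add: power_decreasing)
  ultimately have A1: "p * q\<^sup>2 + q * b\<^sup>2 \<le> 1 - 4 * p\<^sup>2 + 4 * p ^ 3"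
    using zero_less_power[OF p_pos, of 5] by linarith
  have "(p * q\<^sup>2 + q * b\<^sup>2) ^ m - 2 * (b * (p * q\<^sup>2 + q * b)) ^ m + (b\<^sup>2 * (p * q\<^sup>2 + q)) ^ m
      \<le> 8 * exp 4 * (real m * p ^ 5 + (real m * p ^ 3)\<^sup>2) * exp (- 4 * real m * p\<^sup>2)"
    using b by (intro second_difference_powers_estimate[OF A3 A12 A23 \<delta> _ _ r A1 assms]) auto
  then show ?thesis
    unfolding normsq_contr_gbar2_gbar1 q_def b_def .
qed

end

lemma le_one_tenth_of_cube_bound:
  fixes p :: real
  assumes "1000 < m" "0 < p" "real m * p ^ 3 \<le> 1"
  shows "p \<le> 1/10"
proof (rule ccontr)
  assume "\<not> p \<le> 1/10"
  then have "1000 * (1/10) ^ 3 < real m * p ^ 3"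
    using assms by (intro mult_strict_mono power_strict_mono) auto
  then show False
    using assms(3) by (simp add: power_divide)
qed

lemma le_larger_constant_times:
  fixes x K C a b E :: real
  assumes "x \<le> K * (a + b) * E" "K \<le> C" "0 \<le> a" "0 \<le> b" "0 \<le> E"
  shows "x \<le> C * (a * E + b * E)"
proof -
  have "K * (a + b) * E \<le> C * (a + b) * E"
    using assms by (intro mult_right_mono) auto
  then show ?thesis
    using assms(1) by (simp add: algebra_simps)
qed

theorem lemma6p1:
  "\<exists>(m0::nat) (C::real). C > 0 \<and>
     (\<forall>(m::nat) (p::real). m > m0 \<longrightarrow> 0 < p \<longrightarrow> p < 1 \<longrightarrow> real m * p ^ 3 \<le> 1 \<longrightarrow>
        normsq m p 1 (contr m p 1 1 0 1 (gbar1 m p) (gbar1 m p))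
          \<le> C * (real m * p ^ 5 * exp (- 4 * real m * p\<^sup>2) + (real m * p ^ 3)\<^sup>2 * exp (- 4 * real m * p\<^sup>2))
      \<and> normsq m p 2 (contr m p 2 2 1 1 (gbar2 m p) (gbar2 m p))
          \<le> C * (real m * p ^ 4 * exp (- 4 * real m * p\<^sup>2) + (real m * p ^ 3)\<^sup>2 * exp (- 4 * real m * p\<^sup>2))
      \<and> normsq m p 1 (contr m p 2 1 1 1 (gbar2 m p) (gbar1 m p))
          \<le> C * (real m * p ^ 5 * exp (- 4 * real m * p\<^sup>2) + (real m * p ^ 3)\<^sup>2 * exp (- 4 * real m * p\<^sup>2)))"
proof (intro exI conjI allI impI)
  let ?C = "2 ^ 18 * exp 16 :: real"
  show "0 < ?C"
    by simp
  have constants: "8 * exp 4 \<le> ?C" "24 * exp 4 \<le> ?C"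
    using exp_le_cancel_iff[of 4 16] by (simp_all add: mult_mono)
  fix m :: nat and p :: real
  assume "1000 < m" "0 < p" "p < 1" and mp: "real m * p ^ 3 \<le> 1"
  then have p: "0 < p" "p \<le> 1/10" and "2 \<le> m"
    using le_one_tenth_of_cube_bound by auto
  show "normsq m p 1 (contr m p 1 1 0 1 (gbar1 m p) (gbar1 m p))
      \<le> ?C * (real m * p ^ 5 * exp (- 4 * real m * p\<^sup>2) + (real m * p ^ 3)\<^sup>2 * exp (- 4 * real m * p\<^sup>2))"
    using p by (intro le_larger_constant_times[OF normsq_contr_gbar1_gbar1_estimate[OF p mp]]) auto
  show "normsq m p 2 (contr m p 2 2 1 1 (gbar2 m p) (gbar2 m p))
      \<le> ?C * (real m * p ^ 4 * exp (- 4 * real m * p\<^sup>2) + (real m * p ^ 3)\<^sup>2 * exp (- 4 * real m * p\<^sup>2))"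
    using p constants
    by (intro le_larger_constant_times[OF normsq_contr_gbar2_gbar2_estimate[OF p \<open>2 \<le> m\<close> mp]]) auto
  show "normsq m p 1 (contr m p 2 1 1 1 (gbar2 m p) (gbar1 m p))
      \<le> ?C * (real m * p ^ 5 * exp (- 4 * real m * p\<^sup>2) + (real m * p ^ 3)\<^sup>2 * exp (- 4 * real m * p\<^sup>2))"
    using p constants
    by (intro le_larger_constant_times[OF normsq_contr_gbar2_gbar1_estimate[OF p \<open>2 \<le> m\<close> mp]]) auto
qed

end
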